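(* Let $\mathcal{H}$ be a finite-dimensional complex Hilbert space, $\mathbf{C}\subseteq\mathcal{H}$ a subspace (code space) and $P$ the orthogonal projector onto $\mathbf{C}$. Let $\mathcal{N}: B(\mathcal{H})\to B(\mathcal{H})$ be a semi-positive trace-preserving map with an operator-sum representation $\mathcal{N}(\rho)=\sum_i \operatorname{sign}(i)E_i\rho E_i^\dagger$, where $E_i\in B(\mathcal{H})$ and $\operatorname{sign}(i)=-1$ for $i$ in a nonempty subset $\mathbf{J}$ of the indices and $\operatorname{sign}(i)=1$ otherwise. If there is a Hermitian matrix $\alpha=(\alpha_{ij})$ such that $$P E_i^\dagger E_j P=\alpha_{ij}P\quad\text{for all } i,j,$$ then there exists a CPTP map $\mathcal{R}: B(\mathcal{H})\to B(\mathcal{H})$ such that $\mathcal{R}(\mathcal{N}(P\sigma P))=P\sigma P$ for every $\sigma\in B(\mathcal{H})$ (in particular $\mathcal{R}\circ\mathcal{N}(\rho)=\rho$ for every density matrix $\rho$ supported on $\mathbf{C}$).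
   Context: A density matrix is a positive semidefinite operator of trace one. A linear map $\Psi$ on $B(\mathcal{H})$ is Hermitian-preserving if $\Psi(X^\dagger)=\Psi(X)^\dagger$, trace-preserving if $\operatorname{Tr}\Psi(X)=\operatorname{Tr}X$, and semi-positive if it is Hermitian-preserving and there exists an invertible density matrix $\rho$ such that $\Psi(\rho)$ is an invertible density matrix. *)

theory Defs
  imports "HOL-Analysis.Analysis"
begin

type_synonym 'n op = "complex^'n^'n"

definition adj :: "'n::finite op \<Rightarrow> 'n op" where
  "adj A = (\<chi> i j. cnj (A $ j $ i))"

definition mtrace :: "'n::finite op \<Rightarrow> complex" where
  "mtrace A = (\<Sum>i\<in>UNIV. A $ i $ i)"

definition cinner :: "complex^'n::finite \<Rightarrow> complex^'n \<Rightarrow> complex" where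
  "cinner v w = (\<Sum>i\<in>UNIV. cnj (v $ i) * w $ i)"

definition cnonneg :: "complex \<Rightarrow> bool" where
  "cnonneg z \<longleftrightarrow> Im z = 0 \<and> 0 \<le> Re z"

definition smult_op :: "complex \<Rightarrow> 'n::finite op \<Rightarrow> 'n op" where
  "smult_op c A = (\<chi> i j. c * A $ i $ j)"

definition psd :: "'n::finite op \<Rightarrow> bool" where
  "psd A \<longleftrightarrow> (\<forall>v. cnonneg (cinner v (A *v v)))"

definition density :: "'n::finite op \<Rightarrow> bool" where
  "density A \<longleftrightarrow> psd A \<and> mtrace A = 1"

definition herm_preserving :: "('n::finite op \<Rightarrow> 'n op) \<Rightarrow> bool" where
  "herm_preserving \<Psi> \<longleftrightarrow> (\<forall>X. \<Psi> (adj X) = adj (\<Psi> X))"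

definition trace_preserving :: "('n::finite op \<Rightarrow> 'n op) \<Rightarrow> bool" where
  "trace_preserving \<Psi> \<longleftrightarrow> (\<forall>X. mtrace (\<Psi> X) = mtrace X)"

definition semi_positive :: "('n::finite op \<Rightarrow> 'n op) \<Rightarrow> bool" where
  "semi_positive \<Psi> \<longleftrightarrow> herm_preserving \<Psi> \<and>
     (\<exists>\<rho>. density \<rho> \<and> invertible \<rho> \<and> density (\<Psi> \<rho>) \<and> invertible (\<Psi> \<rho>))"

definition clinear_map :: "('n::finite op \<Rightarrow> 'n op) \<Rightarrow> bool" where
  "clinear_map \<Psi> \<longleftrightarrow> (\<forall>X Y. \<Psi> (X + Y) = \<Psi> X + \<Psi> Y) \<and>
                       (\<forall>c X. \<Psi> (smult_op c X) = smult_op c (\<Psi> X))"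

text \<open>Positivity of an m-by-m block operator on C^m \<otimes> H, blocks X a b (a,b < m).\<close>
definition block_psd :: "nat \<Rightarrow> (nat \<Rightarrow> nat \<Rightarrow> 'n::finite op) \<Rightarrow> bool" where
  "block_psd m X \<longleftrightarrow>
     (\<forall>v :: nat \<Rightarrow> complex^'n. cnonneg (\<Sum>a<m. \<Sum>b<m. cinner (v a) (X a b *v v b)))"

text \<open>Complete positivity: id_m \<otimes> \<Psi> is positive for every ancilla dimension m.\<close>
definition completely_positive :: "('n::finite op \<Rightarrow> 'n op) \<Rightarrow> bool" where
  "completely_positive \<Psi> \<longleftrightarrow>
     (\<forall>m X. block_psd m X \<longrightarrow> block_psd m (\<lambda>a b. \<Psi> (X a b)))"

definition CPTP :: "('n::finite op \<Rightarrow> 'n op) \<Rightarrow> bool" where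
  "CPTP \<Psi> \<longleftrightarrow> clinear_map \<Psi> \<and> completely_positive \<Psi> \<and> trace_preserving \<Psi>"

definition csubspace_vec :: "(complex^'n::finite) set \<Rightarrow> bool" where
  "csubspace_vec C \<longleftrightarrow> 0 \<in> C \<and> (\<forall>x\<in>C. \<forall>y\<in>C. x + y \<in> C) \<and> (\<forall>c. \<forall>x\<in>C. c *s x \<in> C)"

definition orth_projector_onto :: "'n::finite op \<Rightarrow> (complex^'n) set \<Rightarrow> bool" where
  "orth_projector_onto P C \<longleftrightarrow> P ** P = P \<and> adj P = P \<and> range (\<lambda>v. P *v v) = C"

end

theory Submission
  imports Defs
begin

text \<open>Trace preservation of N says \<open>\<Sum>\<^sub>i sign(i) E\<^sub>i\<^sup>\<dagger> E\<^sub>i = 1\<close>; compressing by P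
  gives \<open>\<Sum>\<^sub>i sign(i) \<alpha>\<^sub>i\<^sub>i = 1\<close>. The Knill-Laflamme condition makes the inner products of
  the vectors \<open>E\<^sub>i c\<close> independent of the unit code vector c, so Gram-Schmidt applied to them
  for one c yields combinations \<open>F\<^sub>k\<close> of the errors with \<open>P F\<^sub>k\<^sup>\<dagger> F\<^sub>l P = \<delta>\<^sub>k\<^sub>l P\<close>.
  The Kraus map with operators \<open>P F\<^sub>k\<^sup>\<dagger>\<close>, completed by the projector onto the complement of
  the spaces \<open>F\<^sub>k(C)\<close>, is CPTP and sends each \<open>E\<^sub>i \<rho> E\<^sub>i\<^sup>\<dagger>\<close> with \<open>\<rho> = P \<sigma> P\<close> to
  \<open>\<alpha>\<^sub>i\<^sub>i \<rho>\<close>. Since it acts term by term, the signs only enter through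
  \<open>\<Sum>\<^sub>i sign(i) \<alpha>\<^sub>i\<^sub>i = 1\<close>.\<close>

lemma cnj_mult_self: "cnj z * z = complex_of_real ((cmod z)\<^sup>2)"
  by (metis complex_norm_square mult.commute)

lemma matrix_mult_component: "(A ** B) $ i $ j = (\<Sum>k\<in>UNIV. A $ i $ k * B $ k $ j)"
  by (simp add: matrix_matrix_mult_def)

lemma adj_component [simp]: "adj A $ i $ j = cnj (A $ j $ i)"
  by (simp add: adj_def)

lemma smult_op_component [simp]: "smult_op c A $ i $ j = c * A $ i $ j"
  by (simp add: smult_op_def)

lemma adj_adj [simp]: "adj (adj A) = A"
  by (simp add: vec_eq_iff)

lemma adj_mult: "adj (A ** B) = adj B ** adj A"
  by (simp add: vec_eq_iff matrix_mult_component mult.commute)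

lemma adj_add: "adj (A + B) = adj A + adj B"
  by (simp add: vec_eq_iff)

lemma adj_diff: "adj (A - B) = adj A - adj B"
  by (simp add: vec_eq_iff)

lemma adj_0 [simp]: "adj 0 = 0"
  by (simp add: vec_eq_iff)

lemma adj_mat_1 [simp]: "adj (mat 1) = mat 1"
  by (simp add: vec_eq_iff mat_def)

lemma adj_smult_op: "adj (smult_op c A) = smult_op (cnj c) (adj A)"
  by (simp add: vec_eq_iff)

lemma adj_sum: "adj (\<Sum>k\<in>K. f k) = (\<Sum>k\<in>K. adj (f k))"
  by (induction K rule: infinite_finite_induct) (auto simp: adj_add)

lemma smult_op_mult_left: "smult_op c A ** B = smult_op c (A ** B)"
  by (simp add: vec_eq_iff matrix_mult_component sum_distrib_left mult.assoc)

lemma smult_op_mult_right: "A ** smult_op c B = smult_op c (A ** B)"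
  by (simp add: vec_eq_iff matrix_mult_component sum_distrib_left mult.left_commute)

lemma smult_op_smult_op: "smult_op a (smult_op b A) = smult_op (a * b) A"
  by (simp add: vec_eq_iff mult.assoc)

lemma smult_op_1 [simp]: "smult_op 1 A = A"
  by (simp add: vec_eq_iff)

lemma smult_op_0_left [simp]: "smult_op 0 A = 0"
  by (simp add: vec_eq_iff)

lemma smult_op_0_right [simp]: "smult_op c 0 = 0"
  by (simp add: vec_eq_iff)

lemma smult_op_add_right: "smult_op c (A + B) = smult_op c A + smult_op c B"
  by (simp add: vec_eq_iff algebra_simps)

lemma smult_op_add_left: "smult_op (a + b) A = smult_op a A + smult_op b A"
  by (simp add: vec_eq_iff algebra_simps)

lemma smult_op_sum_right: "smult_op c (\<Sum>k\<in>K. f k) = (\<Sum>k\<in>K. smult_op c (f k))"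
  by (induction K rule: infinite_finite_induct) (auto simp: smult_op_add_right)

lemma smult_op_sum_left: "smult_op (\<Sum>k\<in>K. f k) A = (\<Sum>k\<in>K. smult_op (f k) A)"
  by (induction K rule: infinite_finite_induct) (auto simp: smult_op_add_left)

lemma matrix_mult_add_left: "(A + B) ** C = A ** C + B ** (C :: 'n::finite op)"
  by (simp add: vec_eq_iff matrix_mult_component sum.distrib algebra_simps)

lemma matrix_mult_diff_left: "(A - B) ** C = A ** C - B ** (C :: 'n::finite op)"
  by (simp add: vec_eq_iff matrix_mult_component algebra_simps sum_subtractf)

lemma matrix_mult_diff_right: "C ** (A - B) = C ** A - C ** (B :: 'n::finite op)"
  by (simp add: vec_eq_iff matrix_mult_component algebra_simps sum_subtractf)

lemma matrix_mult_sum_left: "(\<Sum>k\<in>K. f k) ** A = (\<Sum>k\<in>K. f k ** (A :: 'n::finite op))"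
  by (induction K rule: infinite_finite_induct) (auto simp: matrix_mult_add_left)

lemma matrix_mult_sum_right: "A ** (\<Sum>k\<in>K. f k) = (\<Sum>k\<in>K. A ** f k)"
  by (induction K rule: infinite_finite_induct) (auto simp: matrix_add_ldistrib)

lemma sum_matrix_vector_mult: "(\<Sum>k\<in>K. f k) *v v = (\<Sum>k\<in>K. f k *v v)"
  by (induction K rule: infinite_finite_induct) (auto simp: matrix_vector_mult_add_rdistrib)

lemma smult_op_matrix_vector_mult: "smult_op c A *v v = c *s (A *v v)"
  by (simp add: vec_eq_iff matrix_vector_mult_def sum_distrib_left mult.assoc)

lemma mtrace_sum: "mtrace (\<Sum>k\<in>K. f k) = (\<Sum>k\<in>K. mtrace (f k))"
  by (induction K rule: infinite_finite_induct) (auto simp: mtrace_def sum.distrib)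

lemma mtrace_smult_op: "mtrace (smult_op c A) = c * mtrace A"
  by (simp add: mtrace_def sum_distrib_left)

lemma mtrace_commute: "mtrace (A ** B) = mtrace (B ** A)"
  using trace_mul_sym by (metis mtrace_def trace_def)

lemma adj_mult_self_eq_0: "adj X ** X = 0 \<Longrightarrow> X = 0"
proof -
  assume "adj X ** X = 0"
  then have "(adj X ** X) $ a $ a = 0" for a
    by simp
  moreover have "(adj X ** X) $ a $ a = of_real (\<Sum>t\<in>UNIV. (cmod (X $ t $ a))\<^sup>2)" for a
    by (simp add: matrix_mult_component cnj_mult_self)
  ultimately have "(\<Sum>t\<in>UNIV. (cmod (X $ t $ a))\<^sup>2) = 0" for a
    by (metis of_real_eq_0_iff)
  then show "X = 0"
    by (simp add: sum_nonneg_eq_0_iff vec_eq_iff)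
qed

lemma cinner_mult_adj: "cinner u (A *v v) = cinner (adj A *v u) v"
proof -
  have "cinner u (A *v v) = (\<Sum>i\<in>UNIV. \<Sum>j\<in>UNIV. cnj (u$i) * (A$i$j * v$j))"
    by (simp add: cinner_def matrix_vector_mult_def sum_distrib_left)
  also have "\<dots> = (\<Sum>j\<in>UNIV. \<Sum>i\<in>UNIV. cnj (u$i) * (A$i$j * v$j))"
    by (rule sum.swap)
  also have "\<dots> = cinner (adj A *v u) v"
    by (simp add: cinner_def matrix_vector_mult_def sum_distrib_left sum_distrib_right mult_ac)
  finally show ?thesis .
qed

lemma cinner_sum_right: "cinner u (\<Sum>k\<in>K. f k) = (\<Sum>k\<in>K. cinner u (f k))"
  unfolding cinner_def by (induction K rule: infinite_finite_induct) (auto simp: sum.distrib algebra_simps)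

lemma cinner_sum_left: "cinner (\<Sum>k\<in>K. f k) u = (\<Sum>k\<in>K. cinner (f k) u)"
  unfolding cinner_def by (induction K rule: infinite_finite_induct) (auto simp: sum.distrib algebra_simps)

lemma cinner_scale_right: "cinner u (c *s v) = c * cinner u v"
  unfolding cinner_def by (simp add: sum_distrib_left algebra_simps)

lemma cinner_scale_left: "cinner (c *s u) v = cnj c * cinner u v"
  unfolding cinner_def by (simp add: sum_distrib_left algebra_simps)

lemma cinner_add_right: "cinner u (v + w) = cinner u v + cinner u w"
  unfolding cinner_def by (simp add: sum.distrib algebra_simps)

lemma cinner_diff_right: "cinner u (v - w) = cinner u v - cinner u w"
  unfolding cinner_def by (simp add: sum_subtractf algebra_simps)

lemma cinner_commute: "cinner v u = cnj (cinner u v)"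
  unfolding cinner_def by (simp add: mult.commute)

lemma cinner_self: "cinner v v = of_real (\<Sum>i\<in>UNIV. (cmod (v $ i))\<^sup>2)"
  unfolding cinner_def by (simp add: cnj_mult_self)

lemma normalize_vector:
  fixes v :: "complex^'n::finite"
  assumes "v \<noteq> 0"
  obtains a where "cinner (a *s v) (a *s v) = 1" and "cinner (a *s v) v *s (a *s v) = v"
proof -
  define t where "t = (\<Sum>i\<in>UNIV. (cmod (v $ i))\<^sup>2)"
  have "t \<noteq> 0"
    using assms by (simp add: t_def sum_nonneg_eq_0_iff vec_eq_iff)
  then have t: "t > 0"
    by (simp add: t_def order_neq_le_trans sum_nonneg)
  have vv: "cinner v v = of_real t"
    by (simp add: t_def cinner_self)
  let ?a = "complex_of_real (1 / sqrt t)"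
  show thesis
  proof
    show "cinner (?a *s v) (?a *s v) = 1"
      using t by (simp add: cinner_scale_left cinner_scale_right vv power2_eq_square[symmetric]
          flip: of_real_mult of_real_power)
    have "cinner (?a *s v) v = of_real (sqrt t)"
      using t by (simp add: cinner_scale_left vv real_div_sqrt flip: of_real_mult of_real_divide)
    then show "cinner (?a *s v) v *s (?a *s v) = v"
      using t by (simp flip: of_real_mult)
  qed
qed

section \<open>Gram-Schmidt orthonormalisation\<close>

definition orthonormal :: "nat \<Rightarrow> (nat \<Rightarrow> complex^'n::finite) \<Rightarrow> bool" where
  "orthonormal r f \<longleftrightarrow> (\<forall>k<r. \<forall>k'<r. cinner (f k) (f k') = (if k = k' then 1 else 0))"

lemma orthonormal_extend:
  assumes "orthonormal r f" and fg: "\<And>k. k < r \<Longrightarrow> cinner (f k) g = 0" and "cinner g g = 1"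
  shows "orthonormal (Suc r) (f(r := g))"
proof -
  have gf: "cinner g (f k) = 0" if "k < r" for k
    using fg[OF that] cinner_commute[of g "f k"] by simp
  show ?thesis
    unfolding orthonormal_def
  proof (intro allI impI)
    fix k k' assume "k < Suc r" "k' < Suc r"
    then consider "k < r" "k' < r" | "k = r" "k' < r" | "k < r" "k' = r" | "k = r" "k' = r"
      by linarith
    then show "cinner ((f(r := g)) k) ((f(r := g)) k') = (if k = k' then 1 else 0)"
      by cases (use assms gf in \<open>auto simp: orthonormal_def\<close>)
  qed
qed

lemma orthonormal_expansion_extend:
  assumes v: "v = (\<Sum>k<r. cinner (f k) v *s f k) + c *s g"
    and gf: "\<And>k. k < r \<Longrightarrow> cinner g (f k) = 0" and gg: "cinner g g = 1"
  shows "v = (\<Sum>k<Suc r. cinner ((f(r := g)) k) v *s (f(r := g)) k)"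
proof -
  have "cinner g v = c"
    by (subst v) (simp add: cinner_add_right cinner_sum_right cinner_scale_right gf gg)
  then have "(\<Sum>k<Suc r. cinner ((f(r := g)) k) v *s (f(r := g)) k) = (\<Sum>k<r. cinner (f k) v *s f k) + c *s g"
    by simp
  then show ?thesis
    by (rule trans[OF v sym])
qed

lemma cinner_orthonormal_residual:
  assumes "orthonormal r f" and "k < r"
  shows "cinner (f k) (x - (\<Sum>k'<r. cinner (f k') x *s f k')) = 0"
  using assms
  by (simp add: orthonormal_def cinner_diff_right cinner_sum_right cinner_scale_right
      if_distrib[of "(*) _"] cong: if_cong)

lemma gram_schmidt_step:
  fixes v :: "complex^'n::finite"
  assumes on: "orthonormal r f" and y: "y = v - (\<Sum>k<r. cinner (f k) v *s f k)" and "y \<noteq> 0"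
  obtains a where "orthonormal (Suc r) (f(r := a *s y))"
    and "v = (\<Sum>k<Suc r. cinner ((f(r := a *s y)) k) v *s (f(r := a *s y)) k)"
    and "\<And>u. u = (\<Sum>k<r. cinner (f k) u *s f k) \<Longrightarrow>
           u = (\<Sum>k<Suc r. cinner ((f(r := a *s y)) k) u *s (f(r := a *s y)) k)"
proof -
  obtain a where gg: "cinner (a *s y) (a *s y) = 1" and gy: "cinner (a *s y) y *s (a *s y) = y"
    using \<open>y \<noteq> 0\<close> by (rule normalize_vector)
  have "cinner (f k) y = 0" if "k < r" for k
    unfolding y using on that by (rule cinner_orthonormal_residual)
  then have fg: "cinner (f k) (a *s y) = 0" if "k < r" for k
    using that by (simp add: cinner_scale_right)
  have gf: "cinner (a *s y) (f k) = 0" if "k < r" for k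
    using fg[OF that] cinner_commute[of "a *s y" "f k"] by simp
  show thesis
  proof (rule that[of a])
    show "orthonormal (Suc r) (f(r := a *s y))"
      using on fg gg by (rule orthonormal_extend)
    have "v = (\<Sum>k<r. cinner (f k) v *s f k) + cinner (a *s y) y *s (a *s y)"
      by (simp only: gy) (simp add: y)
    then show "v = (\<Sum>k<Suc r. cinner ((f(r := a *s y)) k) v *s (f(r := a *s y)) k)"
      using gf gg by (rule orthonormal_expansion_extend)
    fix u assume "u = (\<Sum>k<r. cinner (f k) u *s f k)"
    then have "u = (\<Sum>k<r. cinner (f k) u *s f k) + 0 *s (a *s y)"
      by simp
    then show "u = (\<Sum>k<Suc r. cinner ((f(r := a *s y)) k) u *s (f(r := a *s y)) k)"
      using gf gg by (rule orthonormal_expansion_extend)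
  qed
qed

lemma gram_schmidt:
  fixes w :: "'i \<Rightarrow> complex^'n::finite"
  assumes "finite I"
  shows "\<exists>r f. orthonormal r f \<and> (\<forall>k<r. f k \<in> vec.span (w ` I)) \<and>
           (\<forall>i\<in>I. w i = (\<Sum>k<r. cinner (f k) (w i) *s f k))"
  using assms
proof (induction I rule: finite_induct)
  case empty
  show ?case
    by (rule exI[of _ 0]) (simp add: orthonormal_def)
next
  case (insert x I)
  then obtain r f where on: "orthonormal r f" and sp: "\<forall>k<r. f k \<in> vec.span (w ` I)"
    and rep: "\<forall>i\<in>I. w i = (\<Sum>k<r. cinner (f k) (w i) *s f k)"
    by blast
  have sp': "f k \<in> vec.span (w ` insert x I)" if "k < r" for k
    using sp that vec.span_mono[of "w ` I" "w ` insert x I"] by blast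
  define y where "y = w x - (\<Sum>k<r. cinner (f k) (w x) *s f k)"
  show ?case
  proof (cases "y = 0")
    case True
    then have "w x = (\<Sum>k<r. cinner (f k) (w x) *s f k)"
      by (simp add: y_def)
    then have "\<forall>i\<in>insert x I. w i = (\<Sum>k<r. cinner (f k) (w i) *s f k)"
      using rep by blast
    then show ?thesis
      using on sp' by blast
  next
    case False
    obtain a where on': "orthonormal (Suc r) (f(r := a *s y))"
      and wx: "w x = (\<Sum>k<Suc r. cinner ((f(r := a *s y)) k) (w x) *s (f(r := a *s y)) k)"
      and ext: "\<And>u. u = (\<Sum>k<r. cinner (f k) u *s f k) \<Longrightarrow>
             u = (\<Sum>k<Suc r. cinner ((f(r := a *s y)) k) u *s (f(r := a *s y)) k)"
      using gram_schmidt_step[OF on y_def False] by blast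
    have "a *s y \<in> vec.span (w ` insert x I)"
      unfolding y_def
      by (intro vec.span_scale vec.span_diff vec.span_sum) (use sp' in \<open>auto intro: vec.span_base\<close>)
    then have "\<forall>k<Suc r. (f(r := a *s y)) k \<in> vec.span (w ` insert x I)"
      using sp' by (simp add: less_Suc_eq)
    moreover have "\<forall>i\<in>insert x I. w i = (\<Sum>k<Suc r. cinner ((f(r := a *s y)) k) (w i) *s (f(r := a *s y)) k)"
      using wx rep ext by blast
    ultimately show ?thesis
      using on' by blast
  qed
qed

lemma vec_span_image_eq_sum:
  fixes w :: "'i \<Rightarrow> 'a::field^'n"
  assumes "finite I" and "v \<in> vec.span (w ` I)"
  shows "\<exists>\<beta>. v = (\<Sum>j\<in>I. \<beta> j *s w j)"
  using assms
proof (induction I arbitrary: v rule: finite_induct)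
  case empty
  then show ?case
    by simp
next
  case (insert x I)
  then obtain c where "v - c *s w x \<in> vec.span (w ` I)"
    by (auto simp: vec.span_insert)
  then obtain \<beta> where \<beta>: "v - c *s w x = (\<Sum>j\<in>I. \<beta> j *s w j)"
    using insert.IH by blast
  have "(\<Sum>j\<in>I. (\<beta>(x := c)) j *s w j) = (\<Sum>j\<in>I. \<beta> j *s w j)"
    using insert.hyps by (intro sum.cong) auto
  then have "v = (\<Sum>j\<in>insert x I. (\<beta>(x := c)) j *s w j)"
    using insert.hyps \<beta> by (simp add: algebra_simps)
  then show ?case
    by blast
qed

section \<open>Compressions by the code projector\<close>

lemma cinner_eq_compression_coefficient:
  assumes "P ** adj A ** B ** P = smult_op z P" and "adj P = P" and "P *v c = c" and "cinner c c = 1"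
  shows "cinner (A *v c) (B *v c) = z"
proof -
  have "cinner (A *v c) (B *v c) = cinner (P *v c) (adj A *v (B *v (P *v c)))"
    using cinner_mult_adj[of c "adj A" "B *v c"] by (simp add: assms(3))
  also have "\<dots> = cinner c ((P ** adj A ** B ** P) *v c)"
    using cinner_mult_adj[of c P "adj A *v (B *v (P *v c))"] assms(2)
    by (simp add: matrix_vector_mul_assoc matrix_mul_assoc)
  also have "\<dots> = z"
    by (simp add: assms(1,3,4) smult_op_matrix_vector_mult cinner_scale_right)
  finally show ?thesis .
qed

lemma compression_sum:
  assumes "\<And>j. j \<in> I \<Longrightarrow> P ** X j ** P = smult_op (a j) P"
  shows "P ** (\<Sum>j\<in>I. smult_op (\<beta> j) (X j)) ** P = smult_op (\<Sum>j\<in>I. \<beta> j * a j) P"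
proof -
  have "P ** (\<Sum>j\<in>I. smult_op (\<beta> j) (X j)) ** P = (\<Sum>j\<in>I. smult_op (\<beta> j) (P ** X j ** P))"
    by (simp add: matrix_mult_sum_left matrix_mult_sum_right smult_op_mult_left smult_op_mult_right)
  also have "\<dots> = (\<Sum>j\<in>I. smult_op (\<beta> j * a j) P)"
    by (rule sum.cong) (simp_all add: assms smult_op_smult_op)
  finally show ?thesis
    by (simp add: smult_op_sum_left)
qed

lemma compression_sum_right:
  assumes "\<And>j. j \<in> I \<Longrightarrow> P ** A ** E j ** P = smult_op (a j) P"
  shows "P ** A ** (\<Sum>j\<in>I. smult_op (\<beta> j) (E j)) ** P = smult_op (\<Sum>j\<in>I. \<beta> j * a j) P"
proof -
  have "P ** A ** (\<Sum>j\<in>I. smult_op (\<beta> j) (E j)) = P ** (\<Sum>j\<in>I. smult_op (\<beta> j) (A ** E j))"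
    by (simp add: matrix_mult_sum_right smult_op_mult_right matrix_mul_assoc)
  then show ?thesis
    using compression_sum[of I P "\<lambda>j. A ** E j"] assms by (simp add: matrix_mul_assoc)
qed

lemma compression_sum_left:
  assumes "\<And>j. j \<in> I \<Longrightarrow> P ** adj (E j) ** B ** P = smult_op (a j) P"
  shows "P ** adj (\<Sum>j\<in>I. smult_op (\<beta> j) (E j)) ** B ** P = smult_op (\<Sum>j\<in>I. cnj (\<beta> j) * a j) P"
proof -
  have "P ** adj (\<Sum>j\<in>I. smult_op (\<beta> j) (E j)) ** B = P ** (\<Sum>j\<in>I. smult_op (cnj (\<beta> j)) (adj (E j) ** B))"
    by (simp add: adj_sum adj_smult_op matrix_mult_sum_left matrix_mult_sum_right
        smult_op_mult_left smult_op_mult_right matrix_mul_assoc)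
  then show ?thesis
    using compression_sum[of I P "\<lambda>j. adj (E j) ** B"] assms by (simp add: matrix_mul_assoc)
qed

lemma compression_adj:
  assumes "P ** adj A ** B ** P = smult_op z P" and "adj P = P"
  shows "P ** adj B ** A ** P = smult_op (cnj z) P"
  using arg_cong[OF assms(1), of adj] by (simp add: adj_mult adj_smult_op assms(2) matrix_mul_assoc)

lemma compression_conjugation:
  assumes "P ** adj F ** E ** P = smult_op z P" and "adj P = P"
  shows "(P ** adj F) ** (E ** (P ** \<sigma> ** P) ** adj E) ** adj (P ** adj F) = smult_op (cnj z * z) (P ** \<sigma> ** P)"
proof -
  have "(P ** adj F) ** (E ** (P ** \<sigma> ** P) ** adj E) ** adj (P ** adj F)
      = (P ** adj F ** E ** P) ** \<sigma> ** (P ** adj E ** F ** P)"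
    by (simp add: adj_mult assms(2) matrix_mul_assoc)
  then show ?thesis
    using assms(1) compression_adj[OF assms]
    by (simp add: smult_op_mult_left smult_op_mult_right smult_op_smult_op matrix_mul_assoc mult.commute)
qed

lemma unit_vector_in_range:
  assumes "P ** P = P" and "P \<noteq> 0"
  obtains c where "P *v c = c" and "cinner c c = 1"
proof -
  obtain v where v: "P *v v \<noteq> 0"
    using assms(2) by (metis matrix_eq matrix_vector_mult_0)
  have Pu: "P *v (P *v v) = P *v v"
    by (simp add: matrix_vector_mul_assoc assms(1))
  obtain a where "cinner (a *s (P *v v)) (a *s (P *v v)) = 1"
    using v by (rule normalize_vector)
  moreover have "P *v (a *s (P *v v)) = a *s (P *v v)"
    by (simp add: vector_scalar_commute Pu)
  ultimately show thesis
    using that by blast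
qed

lemma orthonormal_error_combinations:
  fixes E :: "'i \<Rightarrow> 'n::finite op"
  assumes P: "P ** P = P" "adj P = P" "P \<noteq> 0" and "finite I"
    and KL: "\<And>i j. i \<in> I \<Longrightarrow> j \<in> I \<Longrightarrow> P ** adj (E i) ** E j ** P = smult_op (\<alpha> i j) P"
  obtains r :: nat and F :: "nat \<Rightarrow> 'n op" and \<gamma> where
    "\<And>k k'. k < r \<Longrightarrow> k' < r \<Longrightarrow> P ** adj (F k) ** F k' ** P = smult_op (if k = k' then 1 else 0) P"
    and "\<And>k i. i \<in> I \<Longrightarrow> P ** adj (F k) ** E i ** P = smult_op (\<gamma> k i) P"
    and "\<And>i. i \<in> I \<Longrightarrow> \<alpha> i i = (\<Sum>k<r. cnj (\<gamma> k i) * \<gamma> k i)"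
proof -
  obtain c where Pc: "P *v c = c" and cc: "cinner c c = 1"
    using P(1,3) by (rule unit_vector_in_range)
  define w where "w i = E i *v c" for i
  obtain r f where on: "orthonormal r f" and sp: "\<forall>k<r. f k \<in> vec.span (w ` I)"
    and rep: "\<forall>i\<in>I. w i = (\<Sum>k<r. cinner (f k) (w i) *s f k)"
    using gram_schmidt[OF \<open>finite I\<close>] by blast
  have "\<exists>b. f k = (\<Sum>j\<in>I. b j *s w j)" if "k < r" for k
    using sp that by (simp add: vec_span_image_eq_sum[OF \<open>finite I\<close>])
  then obtain \<beta> where \<beta>: "\<And>k. k < r \<Longrightarrow> f k = (\<Sum>j\<in>I. \<beta> k j *s w j)"
    by metis
  define F where "F k = (\<Sum>j\<in>I. smult_op (\<beta> k j) (E j))" for k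
  define \<gamma> where "\<gamma> k i = (\<Sum>j\<in>I. cnj (\<beta> k j) * \<alpha> j i)" for k i
  have Fc: "F k *v c = f k" if "k < r" for k
    by (simp add: F_def \<beta>[OF that] sum_matrix_vector_mult smult_op_matrix_vector_mult w_def)
  have FE: "P ** adj (F k) ** E i ** P = smult_op (\<gamma> k i) P" if "i \<in> I" for k i
    unfolding F_def \<gamma>_def using that by (intro compression_sum_left KL)
  have \<gamma>: "\<gamma> k i = cinner (f k) (w i)" if "k < r" "i \<in> I" for k i
    using cinner_eq_compression_coefficient[OF FE[OF that(2), of k] P(2) Pc cc] by (simp add: Fc[OF that(1)] w_def)
  show thesis
  proof (rule that)
    fix k k' assume "k < r" "k' < r"
    have "P ** adj (F k) ** F k' ** P = smult_op (\<Sum>j\<in>I. \<beta> k' j * \<gamma> k j) P"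
      unfolding F_def[of k'] using FE by (rule compression_sum_right)
    moreover have "(\<Sum>j\<in>I. \<beta> k' j * \<gamma> k j) = cinner (f k) (f k')"
      using cinner_eq_compression_coefficient[OF calculation P(2) Pc cc] by (simp add: Fc \<open>k < r\<close> \<open>k' < r\<close>)
    ultimately show "P ** adj (F k) ** F k' ** P = smult_op (if k = k' then 1 else 0) P"
      using on \<open>k < r\<close> \<open>k' < r\<close> by (simp add: orthonormal_def)
  next
    fix k i assume "i \<in> I"
    then show "P ** adj (F k) ** E i ** P = smult_op (\<gamma> k i) P"
      by (rule FE)
  next
    fix i assume i: "i \<in> I"
    have "\<alpha> i i = cinner (w i) (w i)"
      using cinner_eq_compression_coefficient[OF KL[OF i i] P(2) Pc cc] by (simp add: w_def)
    also have "\<dots> = cinner (\<Sum>k<r. \<gamma> k i *s f k) (w i)"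
      using rep i \<gamma> by (metis (no_types, lifting) lessThan_iff sum.cong)
    also have "\<dots> = (\<Sum>k<r. cnj (\<gamma> k i) * \<gamma> k i)"
      using i by (simp add: cinner_sum_left cinner_scale_left \<gamma>)
    finally show "\<alpha> i i = (\<Sum>k<r. cnj (\<gamma> k i) * \<gamma> k i)" .
  qed
qed

section \<open>Kraus maps and trace preservation\<close>

definition kraus_map :: "('k \<Rightarrow> 'n::finite op) \<Rightarrow> 'k set \<Rightarrow> 'n op \<Rightarrow> 'n op" where
  "kraus_map A K Y = (\<Sum>k\<in>K. A k ** Y ** adj (A k))"

lemma completely_positive_kraus_map:
  fixes A :: "'k \<Rightarrow> 'n::finite op"
  shows "completely_positive (kraus_map A K)"
  unfolding completely_positive_def block_psd_def
proof (intro allI impI)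
  fix m and X :: "nat \<Rightarrow> nat \<Rightarrow> 'n op" and v :: "nat \<Rightarrow> complex^'n"
  assume X: "\<forall>v. cnonneg (\<Sum>a<m. \<Sum>b<m. cinner (v a) (X a b *v v b))"
  have conj: "cinner u ((A k ** Z ** adj (A k)) *v u') = cinner (adj (A k) *v u) (Z *v (adj (A k) *v u'))"
    for k Z u u'
    by (simp add: cinner_mult_adj flip: matrix_vector_mul_assoc)
  have "(\<Sum>a<m. \<Sum>b<m. cinner (v a) (kraus_map A K (X a b) *v v b))
      = (\<Sum>a<m. \<Sum>b<m. \<Sum>k\<in>K. cinner (adj (A k) *v v a) (X a b *v (adj (A k) *v v b)))"
    by (simp add: kraus_map_def sum_matrix_vector_mult cinner_sum_right conj)
  also have "\<dots> = (\<Sum>k\<in>K. \<Sum>a<m. \<Sum>b<m. cinner (adj (A k) *v v a) (X a b *v (adj (A k) *v v b)))"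
    by (subst sum.swap, rule sum.cong[OF refl], rule sum.swap)
  finally have "(\<Sum>a<m. \<Sum>b<m. cinner (v a) (kraus_map A K (X a b) *v v b))
      = (\<Sum>k\<in>K. \<Sum>a<m. \<Sum>b<m. cinner (adj (A k) *v v a) (X a b *v (adj (A k) *v v b)))" .
  moreover have "cnonneg (\<Sum>k\<in>K. \<Sum>a<m. \<Sum>b<m. cinner (adj (A k) *v v a) (X a b *v (adj (A k) *v v b)))"
    using X by (induction K rule: infinite_finite_induct) (auto simp: cnonneg_def)
  ultimately show "cnonneg (\<Sum>a<m. \<Sum>b<m. cinner (v a) (kraus_map A K (X a b) *v v b))"
    by simp
qed

lemma CPTP_kraus_map:
  fixes A :: "'k \<Rightarrow> 'n::finite op"
  assumes "(\<Sum>k\<in>K. adj (A k) ** A k) = mat 1"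
  shows "CPTP (kraus_map A K)"
  unfolding CPTP_def
proof (intro conjI completely_positive_kraus_map)
  show "clinear_map (kraus_map A K)"
    unfolding clinear_map_def kraus_map_def
    by (simp add: matrix_add_ldistrib matrix_mult_add_left sum.distrib smult_op_mult_left
        smult_op_mult_right smult_op_sum_right)
  show "trace_preserving (kraus_map A K)"
    unfolding trace_preserving_def
  proof
    fix Y :: "'n op"
    have "mtrace (kraus_map A K Y) = (\<Sum>k\<in>K. mtrace (adj (A k) ** A k ** Y))"
      by (simp add: kraus_map_def mtrace_sum mtrace_commute[of "A _ ** Y"] matrix_mul_assoc)
    also have "\<dots> = mtrace ((\<Sum>k\<in>K. adj (A k) ** A k) ** Y)"
      by (simp add: mtrace_sum matrix_mult_sum_left)
    also have "\<dots> = mtrace Y"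
      by (simp add: assms)
    finally show "mtrace (kraus_map A K Y) = mtrace Y" .
  qed
qed

lemma CPTP_id: "CPTP (\<lambda>Y. Y)"
  by (simp add: CPTP_def clinear_map_def completely_positive_def trace_preserving_def)

lemma clinear_map_sum_smult_op:
  assumes "clinear_map R"
  shows "R (\<Sum>i\<in>I. smult_op (s i) (X i)) = (\<Sum>i\<in>I. smult_op (s i) (R (X i)))"
proof -
  have add: "R (X + Y) = R X + R Y" and scale: "R (smult_op c X) = smult_op c (R X)" for X Y c
    using assms by (simp_all add: clinear_map_def)
  have "R 0 = 0"
    using scale[of 0 0] by simp
  then show ?thesis
    by (induction I rule: infinite_finite_induct) (simp_all add: add scale)
qed

lemma eq_mat_1_if_mtrace_mult_eq:
  fixes M :: "'n::finite op"
  assumes "\<And>X. mtrace (M ** X) = mtrace X"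
  shows "M = mat 1"
proof -
  have "M $ p $ q = mat 1 $ p $ q" for p q
  proof -
    define X :: "'n op" where "X = (\<chi> a b. if a = q then if b = p then 1 else 0 else 0)"
    have "mtrace (M ** X) = M $ p $ q"
      by (simp add: X_def mtrace_def matrix_mult_component if_distrib[of "(*) _"] cong: if_cong)
    moreover have "mtrace X = mat 1 $ p $ q"
      by (simp add: X_def mtrace_def mat_def)
    ultimately show ?thesis
      using assms by simp
  qed
  then show ?thesis
    by (simp add: vec_eq_iff)
qed

lemma trace_preserving_imp_completeness:
  assumes "trace_preserving (\<lambda>\<rho>. \<Sum>i\<in>I. smult_op (s i) (E i ** \<rho> ** adj (E i)))"
  shows "(\<Sum>i\<in>I. smult_op (s i) (adj (E i) ** E i)) = mat 1"
proof (rule eq_mat_1_if_mtrace_mult_eq)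
  fix X
  have cyclic: "mtrace (adj (E i) ** E i ** X) = mtrace (E i ** X ** adj (E i))" for i
    using mtrace_commute[of "adj (E i)" "E i ** X"] by (simp add: matrix_mul_assoc)
  have "mtrace ((\<Sum>i\<in>I. smult_op (s i) (adj (E i) ** E i)) ** X)
      = (\<Sum>i\<in>I. s i * mtrace (adj (E i) ** E i ** X))"
    by (simp add: matrix_mult_sum_left smult_op_mult_left mtrace_sum mtrace_smult_op)
  also have "\<dots> = mtrace (\<Sum>i\<in>I. smult_op (s i) (E i ** X ** adj (E i)))"
    by (simp add: cyclic mtrace_sum mtrace_smult_op)
  also have "\<dots> = mtrace X"
    using assms by (simp add: trace_preserving_def)
  finally show "mtrace ((\<Sum>i\<in>I. smult_op (s i) (adj (E i) ** E i)) ** X) = mtrace X" .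
qed

lemma trace_preserving_compression_weights:
  assumes "trace_preserving (\<lambda>\<rho>. \<Sum>i\<in>I. smult_op (s i) (E i ** \<rho> ** adj (E i)))" and "P ** P = P"
    and "\<And>i. i \<in> I \<Longrightarrow> P ** adj (E i) ** E i ** P = smult_op (\<alpha> i) P"
  shows "smult_op (\<Sum>i\<in>I. s i * \<alpha> i) P = P"
proof -
  have "smult_op (\<Sum>i\<in>I. s i * \<alpha> i) P = P ** (\<Sum>i\<in>I. smult_op (s i) (adj (E i) ** E i)) ** P"
    using assms(3) by (intro compression_sum[symmetric]) (simp add: matrix_mul_assoc)
  also have "\<dots> = P"
    by (simp add: trace_preserving_imp_completeness[OF assms(1)] assms(2))
  finally show ?thesis .
qed

section \<open>Recovery\<close>

definition syndrome_projector :: "'n::finite op \<Rightarrow> (nat \<Rightarrow> 'n op) \<Rightarrow> nat \<Rightarrow> 'n op" where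
  "syndrome_projector P F r = (\<Sum>k<r. F k ** P ** adj (F k))"

lemma adj_syndrome_projector:
  assumes "adj P = P"
  shows "adj (syndrome_projector P F r) = syndrome_projector P F r"
  by (simp add: syndrome_projector_def adj_sum adj_mult assms matrix_mul_assoc)

lemma syndrome_projector_idem:
  assumes orth: "\<And>k k'. k < r \<Longrightarrow> k' < r \<Longrightarrow> P ** adj (F k) ** F k' ** P = smult_op (if k = k' then 1 else 0) P"
  shows "syndrome_projector P F r ** syndrome_projector P F r = syndrome_projector P F r"
proof -
  have "syndrome_projector P F r ** syndrome_projector P F r
      = (\<Sum>k<r. \<Sum>k'<r. F k ** (P ** adj (F k) ** F k' ** P) ** adj (F k'))"
    by (simp add: syndrome_projector_def matrix_mult_sum_left matrix_mult_sum_right matrix_mul_assoc)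
      (rule sum.swap)
  also have "\<dots> = (\<Sum>k<r. \<Sum>k'<r. if k = k' then F k ** P ** adj (F k') else 0)"
    by (intro sum.cong refl) (simp add: orth smult_op_mult_left smult_op_mult_right)
  also have "\<dots> = syndrome_projector P F r"
    by (simp add: syndrome_projector_def)
  finally show ?thesis .
qed

lemma syndrome_complement_projector:
  assumes "adj P = P"
    and orth: "\<And>k k'. k < r \<Longrightarrow> k' < r \<Longrightarrow> P ** adj (F k) ** F k' ** P = smult_op (if k = k' then 1 else 0) P"
  shows "adj (mat 1 - syndrome_projector P F r) = mat 1 - syndrome_projector P F r"
    and "(mat 1 - syndrome_projector P F r) ** (mat 1 - syndrome_projector P F r) = mat 1 - syndrome_projector P F r"
  using syndrome_projector_idem[OF orth] adj_syndrome_projector[OF assms(1)]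
  by (simp_all add: adj_diff matrix_mult_diff_left matrix_mult_diff_right)

lemma syndrome_complement_annihilates:
  fixes P :: "'n::finite op"
  assumes P: "P ** P = P" "adj P = P"
    and orth: "\<And>k k'. k < r \<Longrightarrow> k' < r \<Longrightarrow> P ** adj (F k) ** F k' ** P = smult_op (if k = k' then 1 else 0) P"
    and \<gamma>: "\<And>k. k < r \<Longrightarrow> P ** adj (F k) ** E ** P = smult_op (\<gamma> k) P"
    and norm: "P ** adj E ** E ** P = smult_op (\<Sum>k<r. cnj (\<gamma> k) * \<gamma> k) P"
  shows "(mat 1 - syndrome_projector P F r) ** E ** P = 0"
proof -
  define Q where "Q = mat 1 - syndrome_projector P F r"
  have Q: "adj Q = Q" "Q ** Q = Q"
    unfolding Q_def using syndrome_complement_projector[OF P(2) orth] by simp_all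
  have \<gamma>': "P ** adj E ** F k ** P = smult_op (cnj (\<gamma> k)) P" if "k < r" for k
    using \<gamma>[OF that] P(2) by (rule compression_adj)
  have QQ: "A ** Q ** Q = A ** Q" and PP: "A ** P ** P = A ** P" for A :: "'n op"
    by (simp_all add: Q(2) P(1) flip: matrix_mul_assoc)
  have "adj (Q ** E ** P) ** (Q ** E ** P) = P ** adj E ** Q ** E ** P"
    by (simp add: adj_mult P(2) Q(1) matrix_mul_assoc QQ)
  also have "\<dots> = P ** adj E ** E ** P - (\<Sum>k<r. (P ** adj E ** F k ** P) ** (P ** adj (F k) ** E ** P))"
    by (simp add: Q_def syndrome_projector_def matrix_mult_diff_left matrix_mult_diff_right
        matrix_mult_sum_left matrix_mult_sum_right matrix_mul_assoc PP)
  also have "\<dots> = 0"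
    by (simp add: norm \<gamma> \<gamma>' smult_op_mult_left smult_op_mult_right smult_op_smult_op P(1)
        smult_op_sum_left mult.commute)
  finally show ?thesis
    unfolding Q_def by (rule adj_mult_self_eq_0)
qed

lemma recovery_from_orthonormal_combinations:
  fixes P :: "'n::finite op" and F :: "nat \<Rightarrow> 'n op"
  assumes P: "P ** P = P" "adj P = P"
    and orth: "\<And>k k'. k < r \<Longrightarrow> k' < r \<Longrightarrow> P ** adj (F k) ** F k' ** P = smult_op (if k = k' then 1 else 0) P"
  obtains R where "CPTP R"
    and "\<And>E \<gamma> \<sigma>. (\<And>k. k < r \<Longrightarrow> P ** adj (F k) ** E ** P = smult_op (\<gamma> k) P) \<Longrightarrow>
           P ** adj E ** E ** P = smult_op (\<Sum>k<r. cnj (\<gamma> k) * \<gamma> k) P \<Longrightarrow>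
           R (E ** (P ** \<sigma> ** P) ** adj E) = smult_op (\<Sum>k<r. cnj (\<gamma> k) * \<gamma> k) (P ** \<sigma> ** P)"
proof -
  define Q where "Q = mat 1 - syndrome_projector P F r"
  have Q: "adj Q = Q" "Q ** Q = Q"
    unfolding Q_def using syndrome_complement_projector[OF P(2) orth] by simp_all
  \<comment> \<open>The extra Kraus operator Q only restores trace preservation: it annihilates every
    correctable error applied to the code space.\<close>
  define G where "G k = (if k < r then P ** adj (F k) else Q)" for k
  have PP: "A ** P ** P = A ** P" for A :: "'n op"
    by (simp add: P(1) flip: matrix_mul_assoc)
  have "(\<Sum>k<r. adj (G k) ** G k) = syndrome_projector P F r"
    unfolding syndrome_projector_def G_def by (rule sum.cong) (simp_all add: adj_mult P(2) matrix_mul_assoc PP)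
  moreover have "G r = Q"
    by (simp add: G_def)
  ultimately have "(\<Sum>k\<in>{..r}. adj (G k) ** G k) = syndrome_projector P F r + Q"
    by (simp add: Q flip: lessThan_Suc_atMost)
  then have "(\<Sum>k\<in>{..r}. adj (G k) ** G k) = mat 1"
    by (simp add: Q_def)
  then have "CPTP (kraus_map G {..r})"
    by (rule CPTP_kraus_map)
  moreover have "kraus_map G {..r} (E ** (P ** \<sigma> ** P) ** adj E) = smult_op (\<Sum>k<r. cnj (\<gamma> k) * \<gamma> k) (P ** \<sigma> ** P)"
    if \<gamma>: "\<And>k. k < r \<Longrightarrow> P ** adj (F k) ** E ** P = smult_op (\<gamma> k) P"
      and norm: "P ** adj E ** E ** P = smult_op (\<Sum>k<r. cnj (\<gamma> k) * \<gamma> k) P" for E \<gamma> \<sigma>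
  proof -
    have QEP: "Q ** E ** P = 0"
      unfolding Q_def using P orth \<gamma> norm by (rule syndrome_complement_annihilates)
    have "G k ** (E ** (P ** \<sigma> ** P) ** adj E) ** adj (G k) = smult_op (cnj (\<gamma> k) * \<gamma> k) (P ** \<sigma> ** P)"
      if "k < r" for k
      using that compression_conjugation[OF \<gamma>[OF that] P(2)] by (simp add: G_def)
    moreover have "G r ** (E ** (P ** \<sigma> ** P) ** adj E) ** adj (G r) = 0"
      using QEP by (simp add: G_def matrix_mul_assoc)
    ultimately show ?thesis
      by (simp add: kraus_map_def smult_op_sum_left flip: lessThan_Suc_atMost)
  qed
  ultimately show thesis
    using that by blast
qed

lemma knill_laflamme_recovery:
  fixes E :: "'i \<Rightarrow> 'n::finite op"
  assumes P: "P ** P = P" "adj P = P" and "finite I"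
    and KL: "\<And>i j. i \<in> I \<Longrightarrow> j \<in> I \<Longrightarrow> P ** adj (E i) ** E j ** P = smult_op (\<alpha> i j) P"
  obtains R where "CPTP R"
    and "\<And>i \<sigma>. i \<in> I \<Longrightarrow> R (E i ** (P ** \<sigma> ** P) ** adj (E i)) = smult_op (\<alpha> i i) (P ** \<sigma> ** P)"
proof (cases "P = 0")
  case True
  then show thesis
    using that[OF CPTP_id] by simp
next
  case False
  obtain r :: nat and F :: "nat \<Rightarrow> 'n op" and \<gamma> where
    orth: "\<And>k k'. k < r \<Longrightarrow> k' < r \<Longrightarrow> P ** adj (F k) ** F k' ** P = smult_op (if k = k' then 1 else 0) P"
    and F\<gamma>: "\<And>k i. i \<in> I \<Longrightarrow> P ** adj (F k) ** E i ** P = smult_op (\<gamma> k i) P"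
    and parseval: "\<And>i. i \<in> I \<Longrightarrow> \<alpha> i i = (\<Sum>k<r. cnj (\<gamma> k i) * \<gamma> k i)"
    using orthonormal_error_combinations[where E = E and \<alpha> = \<alpha>, OF P False \<open>finite I\<close> KL] by blast
  obtain R where "CPTP R"
    and rec: "\<And>E \<gamma> \<sigma>. (\<And>k. k < r \<Longrightarrow> P ** adj (F k) ** E ** P = smult_op (\<gamma> k) P) \<Longrightarrow>
           P ** adj E ** E ** P = smult_op (\<Sum>k<r. cnj (\<gamma> k) * \<gamma> k) P \<Longrightarrow>
           R (E ** (P ** \<sigma> ** P) ** adj E) = smult_op (\<Sum>k<r. cnj (\<gamma> k) * \<gamma> k) (P ** \<sigma> ** P)"
    using recovery_from_orthonormal_combinations[OF P orth] by blast
  show thesis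
  proof (rule that[OF \<open>CPTP R\<close>])
    fix i \<sigma> assume i: "i \<in> I"
    show "R (E i ** (P ** \<sigma> ** P) ** adj (E i)) = smult_op (\<alpha> i i) (P ** \<sigma> ** P)"
      using rec[of "E i" "\<lambda>k. \<gamma> k i"] F\<gamma>[OF i] KL[OF i i] by (simp add: parseval[OF i])
  qed
qed

theorem theorem6:
  fixes C :: "(complex^'n::finite) set" and P :: "'n op"
    and N :: "'n op \<Rightarrow> 'n op"
    and I J :: "'i set" and E :: "'i \<Rightarrow> 'n op" and \<alpha> :: "'i \<Rightarrow> 'i \<Rightarrow> complex"
  assumes "csubspace_vec C"
    and "orth_projector_onto P C"
    and "semi_positive N" and "trace_preserving N"
    and "finite I" and "J \<subseteq> I" and "J \<noteq> {}"
    and "\<And>\<rho>. N \<rho> = (\<Sum>i\<in>I. smult_op (if i \<in> J then -1 else 1) (E i ** \<rho> ** adj (E i)))"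
    and "\<And>i j. i \<in> I \<Longrightarrow> j \<in> I \<Longrightarrow> \<alpha> i j = cnj (\<alpha> j i)"
    and "\<And>i j. i \<in> I \<Longrightarrow> j \<in> I \<Longrightarrow> P ** adj (E i) ** E j ** P = smult_op (\<alpha> i j) P"
  shows "\<exists>R. CPTP R \<and> (\<forall>\<sigma>. R (N (P ** \<sigma> ** P)) = P ** \<sigma> ** P)"
proof -
  have P: "P ** P = P" "adj P = P"
    using assms(2) by (simp_all add: orth_projector_onto_def)
  define s where "s i = (if i \<in> J then -1 else 1 :: complex)" for i
  have N: "N = (\<lambda>\<rho>. \<Sum>i\<in>I. smult_op (s i) (E i ** \<rho> ** adj (E i)))"
    using assms(8) by (simp add: s_def fun_eq_iff)
  have weights: "smult_op (\<Sum>i\<in>I. s i * \<alpha> i i) P = P"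
    using assms(4) P(1) assms(10) unfolding N by (rule trace_preserving_compression_weights)
  obtain R where R: "CPTP R"
    and rec: "\<And>i \<sigma>. i \<in> I \<Longrightarrow> R (E i ** (P ** \<sigma> ** P) ** adj (E i)) = smult_op (\<alpha> i i) (P ** \<sigma> ** P)"
    using knill_laflamme_recovery[where E = E and \<alpha> = \<alpha>, OF P assms(5,10)] by blast
  have "R (N (P ** \<sigma> ** P)) = P ** \<sigma> ** P" for \<sigma>
  proof -
    have "clinear_map R"
      using R by (simp add: CPTP_def)
    then have "R (N (P ** \<sigma> ** P)) = (\<Sum>i\<in>I. smult_op (s i) (R (E i ** (P ** \<sigma> ** P) ** adj (E i))))"
      unfolding N by (rule clinear_map_sum_smult_op)
    also have "\<dots> = smult_op (\<Sum>i\<in>I. s i * \<alpha> i i) (P ** \<sigma> ** P)"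
      by (simp add: rec smult_op_smult_op smult_op_sum_left)
    finally show ?thesis
      by (simp add: weights flip: smult_op_mult_left)
  qed
  with R show ?thesis
    by blast
qed

end
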